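(* Let $K$ be a field. Let $(L,M,N,P,h,\lambda,\lambda',\mu,\nu)$ be a Hopf crossed square of cocommutative Hopf algebras over $K$. Define $M\otimes L\to L$ by $m\otimes l\mapsto \mu(m)\triangleright l$ and $N\otimes L\to L$ by $n\otimes l\mapsto \nu(n)\triangleright l$. Then with these actions (and the given $P$-actions on $L,M,N$ and the given $h$), $(L,M,N,P,h)$ is a Hopf $2$-action; moreover every morphism of Hopf crossed squares is a morphism of the corresponding Hopf $2$-actions. Hence the category $\mathsf{X}^2(\mathsf{Hopf}_{K,coc})$ of Hopf crossed squares is a subcategory of the category $\mathsf{Act}^2(\mathsf{Hopf}_{K,coc})$ of Hopf $2$-actions.
   Context: All Hopf algebras are cocommutative over $K$; Sweedler notation $\Delta(x)=x_1\otimes x_2$, antipode $S$, counit $\epsilon$. For a cocommutative Hopf algebra $B$, a $B$-module Hopf algebra is a Hopf algebra $X$ with a linear map $B\otimes X\to X$, $b\otimes x\mapsto b\triangleright x$, satisfying $(bb')\triangleright x=b\triangleright(b'\triangleright x)$, $1_B\triangleright x=x$, $b\triangleright(xy)=(b_1\triangleright x)(b_2\triangleright y)$, $b\triangleright 1_X=\epsilon(b)1_X$, $\Delta(b\triangleright x)=b_1\triangleright x_1\otimes b_2\triangleright x_2$, $\epsilon(b\triangleright x)=\epsilon(b)\epsilon(x)$. A Hopf crossed module $(B,X,d)$ is a $B$-module Hopf algebra $X$ with a Hopf algebra morphism $d\colon X\to B$ such that $d(b\triangleright x)=b_1d(x)S(b_2)$ and $d(y)\triangleright x=y_1xS(y_2)$.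 A Hopf crossed square $(L,M,N,P,h,\lambda,\lambda',\mu,\nu)$ is a commutative square of Hopf algebra morphisms $\lambda\colon L\to M$, $\lambda'\colon L\to N$, $\mu\colon M\to P$, $\nu\colon N\to P$ ($\mu\lambda=\nu\lambda'$), where $L,M,N$ are $P$-module Hopf algebras and $h\colon M\otimes N\to L$ is a coalgebra map such that for all $l\in L$, $m,m'\in M$, $n,n'\in N$, $p\in P$: (CS1) $(P,M,\mu)$, $(P,N,\nu)$, $(P,L,\mu\lambda)$ are Hopf crossed modules; (CS2) $\lambda,\lambda'$ are $P$-linear; (CS3) $h$ is $P$-linear, i.e. $h(p_1\triangleright m\otimes p_2\triangleright n)=p\triangleright h(m\otimes n)$; (CS4) $\lambda h(m\otimes n)=m_1(\nu(n)\triangleright S(m_2))$ and $\lambda' h(m\otimes n)=(\mu(m)\triangleright n_1)S(n_2)$; (CS5) $h(\lambda(l)\otimes n)=l_1(\nu(n)\triangleright S(l_2))$ and $h(m\otimes\lambda'(l))=(\mu(m)\triangleright l_1)S(l_2)$; (CS6) $h(m\otimes nn')=h(m_1\otimes n_1)(\nu(n_2)\triangleright h(m_2\otimes n'))$ and $h(mm'\otimes n)=(\mu(m_1)\triangleright h(m'\otimes n_1))h(m_2\otimes n_2)$. A morphism of Hopf crossed squares is a quadruple of Hopf algebra morphisms $\alpha\colon L\to\hat L$, $\beta\colon M\to\hat M$, $\gamma\colon N\to\hat N$, $\delta\colon P\to\hat P$ commuting with $\lambda,\lambda',\mu,\nu$ and their hatted versions, with $\alpha(p\triangleright l)=\delta(p)\triangleright\alpha(l)$,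 $\beta(p\triangleright m)=\delta(p)\triangleright\beta(m)$, $\gamma(p\triangleright n)=\delta(p)\triangleright\gamma(n)$, and $\alpha h=\hat h(\beta\otimes\gamma)$. A Hopf $2$-action $(L,M,N,P,h)$ consists of cocommutative Hopf algebras $L,M,N,P$ such that $L,M,N$ are $P$-module Hopf algebras, $L$ is an $M$-module Hopf algebra and an $N$-module Hopf algebra, and a coalgebra morphism $h\colon M\otimes N\to L$, such that for all $m,m'\in M$, $n,n'\in N$, $l\in L$, $p\in P$: (2A1) $(p_1\triangleright m)\triangleright(p_2\triangleright l)=p\triangleright(m\triangleright l)$ and $(p_1\triangleright n)\triangleright(p_2\triangleright l)=p\triangleright(n\triangleright l)$; (2A2) $h$ is $P$-linear; (2A3) $h(1_M\otimes n)=\epsilon(n)1_L$, $h(m\otimes 1_N)=\epsilon(m)1_L$; (2A4) $h(m\otimes nn')=h(m_1\otimes n_1)(n_2\triangleright h(m_2\otimes n'))$ and $h(mm'\otimes n)=(m_1\triangleright h(m'\otimes n_1))h(m_2\otimes n_2)$; (2A5) $(m_1\triangleright(n_1\triangleright l))h(m_2\otimes n_2)=h(m_1\otimes n_1)(n_2\triangleright(m_2\triangleright l))$. A morphism of Hopf $2$-actions $(L,M,N,P,h)\to(L',M',N',P',h')$ is a quadruple of Hopf algebra morphisms $\alpha\colon L\to L'$, $\beta\colon M\to M'$, $\gamma\colon N\to N'$, $\delta\colon P\to P'$ with $\alpha(p\triangleright l)=\delta(p)\triangleright\alpha(l)$, $\alpha(m\triangleright l)=\beta(m)\triangleright\alpha(l)$,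 $\alpha(n\triangleright l)=\gamma(n)\triangleright\alpha(l)$, $\beta(p\triangleright m)=\delta(p)\triangleright\beta(m)$, $\gamma(p\triangleright n)=\delta(p)\triangleright\gamma(n)$, and $\alpha h=h'(\beta\otimes\gamma)$. *)

theory Defs
  imports Complex_Main
begin

text \<open>Elements of tensor products are
  represented by finite lists of simple tensors (finite sums). Two such lists denote the
  same tensor iff they cannot be separated by products of linear functionals, which over a
  field is exactly equality in the algebraic tensor product.\<close>

record ('k, 'a) hopf =
  hscale :: "'k \<Rightarrow> 'a \<Rightarrow> 'a"
  hmult :: "'a \<Rightarrow> 'a \<Rightarrow> 'a"
  hunit :: 'a
  hcomult :: "'a \<Rightarrow> ('a \<times> 'a) list"
  hcounit :: "'a \<Rightarrow> 'k"
  hantipode :: "'a \<Rightarrow> 'a"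

definition lin_functional :: "('k::field \<Rightarrow> 'a::ab_group_add \<Rightarrow> 'a) \<Rightarrow> ('a \<Rightarrow> 'k) \<Rightarrow> bool" where
  "lin_functional s \<phi> \<longleftrightarrow> Vector_Spaces.linear s (*) \<phi>"

definition teq2 :: "('k::field \<Rightarrow> 'a::ab_group_add \<Rightarrow> 'a) \<Rightarrow> ('k \<Rightarrow> 'b::ab_group_add \<Rightarrow> 'b)
    \<Rightarrow> ('a \<times> 'b) list \<Rightarrow> ('a \<times> 'b) list \<Rightarrow> bool" where
  "teq2 sa sb xs ys \<longleftrightarrow>
     (\<forall>\<phi> \<psi>. lin_functional sa \<phi> \<and> lin_functional sb \<psi> \<longrightarrow>
        (\<Sum>(a, b) \<leftarrow> xs. \<phi> a * \<psi> b) = (\<Sum>(a, b) \<leftarrow> ys. \<phi> a * \<psi> b))"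

definition teq3 :: "('k::field \<Rightarrow> 'a::ab_group_add \<Rightarrow> 'a)
    \<Rightarrow> ('a \<times> 'a \<times> 'a) list \<Rightarrow> ('a \<times> 'a \<times> 'a) list \<Rightarrow> bool" where
  "teq3 s xs ys \<longleftrightarrow>
     (\<forall>\<phi> \<psi> \<chi>. lin_functional s \<phi> \<and> lin_functional s \<psi> \<and> lin_functional s \<chi> \<longrightarrow>
        (\<Sum>(a, b, c) \<leftarrow> xs. \<phi> a * \<psi> b * \<chi> c) = (\<Sum>(a, b, c) \<leftarrow> ys. \<phi> a * \<psi> b * \<chi> c))"

definition bilinear_map :: "('k::field \<Rightarrow> 'a::ab_group_add \<Rightarrow> 'a) \<Rightarrow> ('k \<Rightarrow> 'b::ab_group_add \<Rightarrow> 'b)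
    \<Rightarrow> ('k \<Rightarrow> 'c::ab_group_add \<Rightarrow> 'c) \<Rightarrow> ('a \<Rightarrow> 'b \<Rightarrow> 'c) \<Rightarrow> bool" where
  "bilinear_map sa sb sc f \<longleftrightarrow>
     (\<forall>b. Vector_Spaces.linear sa sc (\<lambda>a. f a b)) \<and> (\<forall>a. Vector_Spaces.linear sb sc (\<lambda>b. f a b))"

definition cc_hopf :: "('k::field, 'a::ab_group_add) hopf \<Rightarrow> bool" where
  "cc_hopf H \<longleftrightarrow>
     (let s = hscale H; mul = hmult H; u = hunit H; \<Delta> = hcomult H;
          \<epsilon> = hcounit H; S = hantipode H in
       vector_space s
     \<comment> \<open>unital associative K-algebra\<close>
     \<and> bilinear_map s s s mul
     \<and> (\<forall>x y z. mul (mul x y) z = mul x (mul y z))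
     \<and> (\<forall>x. mul u x = x \<and> mul x u = x)
     \<comment> \<open>coassociative counital K-coalgebra\<close>
     \<and> (\<forall>x y. teq2 s s (\<Delta> (x + y)) (\<Delta> x @ \<Delta> y))
     \<and> (\<forall>c x. teq2 s s (\<Delta> (s c x)) (map (\<lambda>(a, b). (s c a, b)) (\<Delta> x)))
     \<and> (\<forall>x. teq3 s [(a, b1, b2). (a, b) \<leftarrow> \<Delta> x, (b1, b2) \<leftarrow> \<Delta> b]
                    [(a1, a2, b). (a, b) \<leftarrow> \<Delta> x, (a1, a2) \<leftarrow> \<Delta> a])
     \<and> lin_functional s \<epsilon>
     \<and> (\<forall>x. (\<Sum>(a, b) \<leftarrow> \<Delta> x. s (\<epsilon> a) b) = x \<and> (\<Sum>(a, b) \<leftarrow> \<Delta> x. s (\<epsilon> b) a) = x)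
     \<comment> \<open>bialgebra compatibility\<close>
     \<and> (\<forall>x y. teq2 s s (\<Delta> (mul x y)) [(mul a c, mul b d). (a, b) \<leftarrow> \<Delta> x, (c, d) \<leftarrow> \<Delta> y])
     \<and> teq2 s s (\<Delta> u) [(u, u)]
     \<and> (\<forall>x y. \<epsilon> (mul x y) = \<epsilon> x * \<epsilon> y)
     \<and> \<epsilon> u = 1
     \<comment> \<open>antipode\<close>
     \<and> Vector_Spaces.linear s s S
     \<and> (\<forall>x. (\<Sum>(a, b) \<leftarrow> \<Delta> x. mul a (S b)) = s (\<epsilon> x) u
           \<and> (\<Sum>(a, b) \<leftarrow> \<Delta> x. mul (S a) b) = s (\<epsilon> x) u)
     \<comment> \<open>cocommutativity\<close>
     \<and> (\<forall>x. teq2 s s (\<Delta> x) (map (\<lambda>(a, b). (b, a)) (\<Delta> x))))"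

definition hopf_morphism :: "('k::field, 'a::ab_group_add) hopf \<Rightarrow> ('k, 'b::ab_group_add) hopf
    \<Rightarrow> ('a \<Rightarrow> 'b) \<Rightarrow> bool" where
  "hopf_morphism A B f \<longleftrightarrow>
     Vector_Spaces.linear (hscale A) (hscale B) f
     \<and> (\<forall>x y. f (hmult A x y) = hmult B (f x) (f y))
     \<and> f (hunit A) = hunit B
     \<and> (\<forall>x. teq2 (hscale B) (hscale B) (hcomult B (f x)) (map (\<lambda>(a, b). (f a, f b)) (hcomult A x)))
     \<and> (\<forall>x. hcounit B (f x) = hcounit A x)"

definition module_hopf :: "('k::field, 'b::ab_group_add) hopf \<Rightarrow> ('k, 'x::ab_group_add) hopf
    \<Rightarrow> ('b \<Rightarrow> 'x \<Rightarrow> 'x) \<Rightarrow> bool" where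
  "module_hopf B X act \<longleftrightarrow>
     bilinear_map (hscale B) (hscale X) (hscale X) act
     \<and> (\<forall>b b' x. act (hmult B b b') x = act b (act b' x))
     \<and> (\<forall>x. act (hunit B) x = x)
     \<and> (\<forall>b x y. act b (hmult X x y) = (\<Sum>(b1, b2) \<leftarrow> hcomult B b. hmult X (act b1 x) (act b2 y)))
     \<and> (\<forall>b. act b (hunit X) = hscale X (hcounit B b) (hunit X))
     \<and> (\<forall>b x. teq2 (hscale X) (hscale X) (hcomult X (act b x))
                [(act b1 x1, act b2 x2). (b1, b2) \<leftarrow> hcomult B b, (x1, x2) \<leftarrow> hcomult X x])
     \<and> (\<forall>b x. hcounit X (act b x) = hcounit B b * hcounit X x)"

definition hopf_crossed_module :: "('k::field, 'b::ab_group_add) hopf \<Rightarrow> ('k, 'x::ab_group_add) hopf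
    \<Rightarrow> ('b \<Rightarrow> 'x \<Rightarrow> 'x) \<Rightarrow> ('x \<Rightarrow> 'b) \<Rightarrow> bool" where
  "hopf_crossed_module B X act d \<longleftrightarrow>
     module_hopf B X act \<and> hopf_morphism X B d
     \<and> (\<forall>b x. d (act b x) = (\<Sum>(b1, b2) \<leftarrow> hcomult B b. hmult B (hmult B b1 (d x)) (hantipode B b2)))
     \<and> (\<forall>y x. act (d y) x = (\<Sum>(y1, y2) \<leftarrow> hcomult X y. hmult X (hmult X y1 x) (hantipode X y2)))"

definition coalg_map2 :: "('k::field, 'm::ab_group_add) hopf \<Rightarrow> ('k, 'n::ab_group_add) hopf
    \<Rightarrow> ('k, 'l::ab_group_add) hopf \<Rightarrow> ('m \<Rightarrow> 'n \<Rightarrow> 'l) \<Rightarrow> bool" where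
  "coalg_map2 M N L h \<longleftrightarrow>
     bilinear_map (hscale M) (hscale N) (hscale L) h
     \<and> (\<forall>m n. teq2 (hscale L) (hscale L) (hcomult L (h m n))
                [(h m1 n1, h m2 n2). (m1, m2) \<leftarrow> hcomult M m, (n1, n2) \<leftarrow> hcomult N n])
     \<and> (\<forall>m n. hcounit L (h m n) = hcounit M m * hcounit N n)"

definition hopf_crossed_square ::
  "('k::field, 'l::ab_group_add) hopf \<Rightarrow> ('k, 'm::ab_group_add) hopf \<Rightarrow> ('k, 'n::ab_group_add) hopf
   \<Rightarrow> ('k, 'p::ab_group_add) hopf
   \<Rightarrow> ('p \<Rightarrow> 'l \<Rightarrow> 'l) \<Rightarrow> ('p \<Rightarrow> 'm \<Rightarrow> 'm) \<Rightarrow> ('p \<Rightarrow> 'n \<Rightarrow> 'n)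
   \<Rightarrow> ('m \<Rightarrow> 'n \<Rightarrow> 'l) \<Rightarrow> ('l \<Rightarrow> 'm) \<Rightarrow> ('l \<Rightarrow> 'n) \<Rightarrow> ('m \<Rightarrow> 'p) \<Rightarrow> ('n \<Rightarrow> 'p) \<Rightarrow> bool" where
  "hopf_crossed_square L M N P actL actM actN h lam lam' mu nu \<longleftrightarrow>
     cc_hopf L \<and> cc_hopf M \<and> cc_hopf N \<and> cc_hopf P
     \<and> hopf_morphism L M lam \<and> hopf_morphism L N lam' \<and> hopf_morphism M P mu \<and> hopf_morphism N P nu
     \<and> (\<forall>l. mu (lam l) = nu (lam' l))
     \<and> module_hopf P L actL \<and> module_hopf P M actM \<and> module_hopf P N actN
     \<and> coalg_map2 M N L h
     \<comment> \<open>CS1\<close>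
     \<and> hopf_crossed_module P M actM mu \<and> hopf_crossed_module P N actN nu
     \<and> hopf_crossed_module P L actL (mu \<circ> lam)
     \<comment> \<open>CS2\<close>
     \<and> (\<forall>p l. lam (actL p l) = actM p (lam l)) \<and> (\<forall>p l. lam' (actL p l) = actN p (lam' l))
     \<comment> \<open>CS3\<close>
     \<and> (\<forall>p m n. (\<Sum>(p1, p2) \<leftarrow> hcomult P p. h (actM p1 m) (actN p2 n)) = actL p (h m n))
     \<comment> \<open>CS4\<close>
     \<and> (\<forall>m n. lam (h m n) = (\<Sum>(m1, m2) \<leftarrow> hcomult M m. hmult M m1 (actM (nu n) (hantipode M m2))))
     \<and> (\<forall>m n. lam' (h m n) = (\<Sum>(n1, n2) \<leftarrow> hcomult N n. hmult N (actN (mu m) n1) (hantipode N n2)))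
     \<comment> \<open>CS5\<close>
     \<and> (\<forall>l n. h (lam l) n = (\<Sum>(l1, l2) \<leftarrow> hcomult L l. hmult L l1 (actL (nu n) (hantipode L l2))))
     \<and> (\<forall>m l. h m (lam' l) = (\<Sum>(l1, l2) \<leftarrow> hcomult L l. hmult L (actL (mu m) l1) (hantipode L l2)))
     \<comment> \<open>CS6\<close>
     \<and> (\<forall>m n n'. h m (hmult N n n') =
          (\<Sum>(m1, m2) \<leftarrow> hcomult M m. \<Sum>(n1, n2) \<leftarrow> hcomult N n.
              hmult L (h m1 n1) (actL (nu n2) (h m2 n'))))
     \<and> (\<forall>m m' n. h (hmult M m m') n =
          (\<Sum>(m1, m2) \<leftarrow> hcomult M m. \<Sum>(n1, n2) \<leftarrow> hcomult N n.
              hmult L (actL (mu m1) (h m' n1)) (h m2 n2)))"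

definition hopf_crossed_square_morphism ::
  "('k::field, 'l::ab_group_add) hopf \<Rightarrow> ('k, 'm::ab_group_add) hopf \<Rightarrow> ('k, 'n::ab_group_add) hopf
   \<Rightarrow> ('k, 'p::ab_group_add) hopf
   \<Rightarrow> ('p \<Rightarrow> 'l \<Rightarrow> 'l) \<Rightarrow> ('p \<Rightarrow> 'm \<Rightarrow> 'm) \<Rightarrow> ('p \<Rightarrow> 'n \<Rightarrow> 'n)
   \<Rightarrow> ('m \<Rightarrow> 'n \<Rightarrow> 'l) \<Rightarrow> ('l \<Rightarrow> 'm) \<Rightarrow> ('l \<Rightarrow> 'n) \<Rightarrow> ('m \<Rightarrow> 'p) \<Rightarrow> ('n \<Rightarrow> 'p)
   \<Rightarrow> ('k, 'l2::ab_group_add) hopf \<Rightarrow> ('k, 'm2::ab_group_add) hopf \<Rightarrow> ('k, 'n2::ab_group_add) hopf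
   \<Rightarrow> ('k, 'p2::ab_group_add) hopf
   \<Rightarrow> ('p2 \<Rightarrow> 'l2 \<Rightarrow> 'l2) \<Rightarrow> ('p2 \<Rightarrow> 'm2 \<Rightarrow> 'm2) \<Rightarrow> ('p2 \<Rightarrow> 'n2 \<Rightarrow> 'n2)
   \<Rightarrow> ('m2 \<Rightarrow> 'n2 \<Rightarrow> 'l2) \<Rightarrow> ('l2 \<Rightarrow> 'm2) \<Rightarrow> ('l2 \<Rightarrow> 'n2) \<Rightarrow> ('m2 \<Rightarrow> 'p2) \<Rightarrow> ('n2 \<Rightarrow> 'p2)
   \<Rightarrow> ('l \<Rightarrow> 'l2) \<Rightarrow> ('m \<Rightarrow> 'm2) \<Rightarrow> ('n \<Rightarrow> 'n2) \<Rightarrow> ('p \<Rightarrow> 'p2) \<Rightarrow> bool" where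
  "hopf_crossed_square_morphism L M N P actL actM actN h lam lam' mu nu
       L2 M2 N2 P2 actL2 actM2 actN2 h2 lam2 lam2' mu2 nu2 \<alpha> \<beta> \<gamma> \<delta> \<longleftrightarrow>
     hopf_morphism L L2 \<alpha> \<and> hopf_morphism M M2 \<beta> \<and> hopf_morphism N N2 \<gamma> \<and> hopf_morphism P P2 \<delta>
     \<and> (\<forall>l. \<beta> (lam l) = lam2 (\<alpha> l)) \<and> (\<forall>l. \<gamma> (lam' l) = lam2' (\<alpha> l))
     \<and> (\<forall>m. \<delta> (mu m) = mu2 (\<beta> m)) \<and> (\<forall>n. \<delta> (nu n) = nu2 (\<gamma> n))
     \<and> (\<forall>p l. \<alpha> (actL p l) = actL2 (\<delta> p) (\<alpha> l))
     \<and> (\<forall>p m. \<beta> (actM p m) = actM2 (\<delta> p) (\<beta> m))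
     \<and> (\<forall>p n. \<gamma> (actN p n) = actN2 (\<delta> p) (\<gamma> n))
     \<and> (\<forall>m n. \<alpha> (h m n) = h2 (\<beta> m) (\<gamma> n))"

definition hopf_2action ::
  "('k::field, 'l::ab_group_add) hopf \<Rightarrow> ('k, 'm::ab_group_add) hopf \<Rightarrow> ('k, 'n::ab_group_add) hopf
   \<Rightarrow> ('k, 'p::ab_group_add) hopf
   \<Rightarrow> ('p \<Rightarrow> 'l \<Rightarrow> 'l) \<Rightarrow> ('p \<Rightarrow> 'm \<Rightarrow> 'm) \<Rightarrow> ('p \<Rightarrow> 'n \<Rightarrow> 'n)
   \<Rightarrow> ('m \<Rightarrow> 'l \<Rightarrow> 'l) \<Rightarrow> ('n \<Rightarrow> 'l \<Rightarrow> 'l) \<Rightarrow> ('m \<Rightarrow> 'n \<Rightarrow> 'l) \<Rightarrow> bool" where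
  "hopf_2action L M N P actPL actPM actPN actML actNL h \<longleftrightarrow>
     cc_hopf L \<and> cc_hopf M \<and> cc_hopf N \<and> cc_hopf P
     \<and> module_hopf P L actPL \<and> module_hopf P M actPM \<and> module_hopf P N actPN
     \<and> module_hopf M L actML \<and> module_hopf N L actNL
     \<and> coalg_map2 M N L h
     \<comment> \<open>2A1\<close>
     \<and> (\<forall>p m l. (\<Sum>(p1, p2) \<leftarrow> hcomult P p. actML (actPM p1 m) (actPL p2 l)) = actPL p (actML m l))
     \<and> (\<forall>p n l. (\<Sum>(p1, p2) \<leftarrow> hcomult P p. actNL (actPN p1 n) (actPL p2 l)) = actPL p (actNL n l))
     \<comment> \<open>2A2\<close>
     \<and> (\<forall>p m n. (\<Sum>(p1, p2) \<leftarrow> hcomult P p. h (actPM p1 m) (actPN p2 n)) = actPL p (h m n))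
     \<comment> \<open>2A3\<close>
     \<and> (\<forall>n. h (hunit M) n = hscale L (hcounit N n) (hunit L))
     \<and> (\<forall>m. h m (hunit N) = hscale L (hcounit M m) (hunit L))
     \<comment> \<open>2A4\<close>
     \<and> (\<forall>m n n'. h m (hmult N n n') =
          (\<Sum>(m1, m2) \<leftarrow> hcomult M m. \<Sum>(n1, n2) \<leftarrow> hcomult N n.
              hmult L (h m1 n1) (actNL n2 (h m2 n'))))
     \<and> (\<forall>m m' n. h (hmult M m m') n =
          (\<Sum>(m1, m2) \<leftarrow> hcomult M m. \<Sum>(n1, n2) \<leftarrow> hcomult N n.
              hmult L (actML m1 (h m' n1)) (h m2 n2)))
     \<comment> \<open>2A5\<close>
     \<and> (\<forall>m n l.
          (\<Sum>(m1, m2) \<leftarrow> hcomult M m. \<Sum>(n1, n2) \<leftarrow> hcomult N n.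
              hmult L (actML m1 (actNL n1 l)) (h m2 n2)) =
          (\<Sum>(m1, m2) \<leftarrow> hcomult M m. \<Sum>(n1, n2) \<leftarrow> hcomult N n.
              hmult L (h m1 n1) (actNL n2 (actML m2 l))))"

definition hopf_2action_morphism ::
  "('k::field, 'l::ab_group_add) hopf \<Rightarrow> ('k, 'm::ab_group_add) hopf \<Rightarrow> ('k, 'n::ab_group_add) hopf
   \<Rightarrow> ('k, 'p::ab_group_add) hopf
   \<Rightarrow> ('p \<Rightarrow> 'l \<Rightarrow> 'l) \<Rightarrow> ('p \<Rightarrow> 'm \<Rightarrow> 'm) \<Rightarrow> ('p \<Rightarrow> 'n \<Rightarrow> 'n)
   \<Rightarrow> ('m \<Rightarrow> 'l \<Rightarrow> 'l) \<Rightarrow> ('n \<Rightarrow> 'l \<Rightarrow> 'l) \<Rightarrow> ('m \<Rightarrow> 'n \<Rightarrow> 'l)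
   \<Rightarrow> ('k, 'l2::ab_group_add) hopf \<Rightarrow> ('k, 'm2::ab_group_add) hopf \<Rightarrow> ('k, 'n2::ab_group_add) hopf
   \<Rightarrow> ('k, 'p2::ab_group_add) hopf
   \<Rightarrow> ('p2 \<Rightarrow> 'l2 \<Rightarrow> 'l2) \<Rightarrow> ('p2 \<Rightarrow> 'm2 \<Rightarrow> 'm2) \<Rightarrow> ('p2 \<Rightarrow> 'n2 \<Rightarrow> 'n2)
   \<Rightarrow> ('m2 \<Rightarrow> 'l2 \<Rightarrow> 'l2) \<Rightarrow> ('n2 \<Rightarrow> 'l2 \<Rightarrow> 'l2) \<Rightarrow> ('m2 \<Rightarrow> 'n2 \<Rightarrow> 'l2)
   \<Rightarrow> ('l \<Rightarrow> 'l2) \<Rightarrow> ('m \<Rightarrow> 'm2) \<Rightarrow> ('n \<Rightarrow> 'n2) \<Rightarrow> ('p \<Rightarrow> 'p2) \<Rightarrow> bool" where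
  "hopf_2action_morphism L M N P actPL actPM actPN actML actNL h
       L2 M2 N2 P2 actPL2 actPM2 actPN2 actML2 actNL2 h2 \<alpha> \<beta> \<gamma> \<delta> \<longleftrightarrow>
     hopf_morphism L L2 \<alpha> \<and> hopf_morphism M M2 \<beta> \<and> hopf_morphism N N2 \<gamma> \<and> hopf_morphism P P2 \<delta>
     \<and> (\<forall>p l. \<alpha> (actPL p l) = actPL2 (\<delta> p) (\<alpha> l))
     \<and> (\<forall>m l. \<alpha> (actML m l) = actML2 (\<beta> m) (\<alpha> l))
     \<and> (\<forall>n l. \<alpha> (actNL n l) = actNL2 (\<gamma> n) (\<alpha> l))
     \<and> (\<forall>p m. \<beta> (actPM p m) = actPM2 (\<delta> p) (\<beta> m))
     \<and> (\<forall>p n. \<gamma> (actPN p n) = actPN2 (\<delta> p) (\<gamma> n))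
     \<and> (\<forall>m n. \<alpha> (h m n) = h2 (\<beta> m) (\<gamma> n))"

end

theory Submission
  imports Defs
begin

text \<open>Tensors are lists of simple tensors compared by products of linear functionals; expanding
  in bases shows that such comparisons survive every bilinear or trilinear map, so each Hopf algebra
  axiom becomes a rewriting rule for Sweedler sums.

  The actions of $M$ and $N$ on $L$ are pulled back along $\mu$ and $\nu$. Axiom 2A1 is the
  equivariance of the boundaries $\mu$ and $\nu$, 2A2 and 2A4 are CS3 and CS6, and 2A3 is CS5 at
  $l = 1$. For 2A5, $L$ is a crossed module over $P$ with boundary $\mu\lambda$, so
  $y\,x = (\mu\lambda(y_1) \triangleright x)\, y_2$; by CS4,
  $\mu\lambda h(m \otimes n) = \mu(m_1)\,\nu(n_1)\,\mu(S m_2)\, S\nu(n_2)$, and once cocommutativity has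
  moved the Sweedler legs, the antipodes cancel against $\nu(n_2) \triangleright \mu(m_2) \triangleright l$.
  Morphisms of crossed squares commute with $\mu$, $\nu$ and the $P$-actions, hence with the
  induced actions.\<close>

abbreviation lin :: "('k::field \<Rightarrow> 'a::ab_group_add \<Rightarrow> 'a) \<Rightarrow> ('k \<Rightarrow> 'b::ab_group_add \<Rightarrow> 'b)
    \<Rightarrow> ('a \<Rightarrow> 'b) \<Rightarrow> bool" where
  "lin \<equiv> Vector_Spaces.linear"

lemma vector_space_module: "vector_space s \<Longrightarrow> module s"
  by (simp add: module_iff_vector_space)

lemma lin_scale: "lin s t f \<Longrightarrow> f (s c x) = t c (f x)"
  by (simp add: Vector_Spaces.linear_iff)

lemma lin_sum: "lin s t f \<Longrightarrow> f (\<Sum>x\<in>A. g x) = (\<Sum>x\<in>A. f (g x))"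
  by (simp add: linear_iff_module_hom module_hom.sum)

lemma lin_sum_list: "lin s t f \<Longrightarrow> f (\<Sum>x\<leftarrow>xs. g x) = (\<Sum>x\<leftarrow>xs. f (g x))"
  by (induction xs) (simp_all add: linear_iff_module_hom module_hom.zero module_hom.add)

lemma lin_id: "vector_space s \<Longrightarrow> lin s s (\<lambda>x. x)"
  using vector_space.linear_id[of s] by (simp add: id_def)

lemma lin_comp: "lin t u f \<Longrightarrow> lin s t F \<Longrightarrow> lin s u (\<lambda>x. f (F x))"
  using Vector_Spaces.linear_compose[of s t F u f] by (simp add: o_def)

lemma lin_sum_list_fun:
  assumes "vector_space s" "vector_space t" "\<And>a b. lin s t (\<lambda>x. G a b x)"
  shows "lin s t (\<lambda>x. \<Sum>(a, b) \<leftarrow> xs. G a b x)"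
proof (induction xs)
  case Nil
  show ?case
    using assms(1,2) module.scale_zero_right[OF vector_space_module[OF assms(2)]]
    by (simp add: Vector_Spaces.linear_iff)
next
  case (Cons ab xs)
  then show ?case
    using assms(3)[of "fst ab" "snd ab"]
    by (simp add: Vector_Spaces.linear_iff vector_space.vector_space_assms(1) algebra_simps case_prod_beta')
qed

lemma vector_space_field: "vector_space ((*) :: 'k::field \<Rightarrow> 'k \<Rightarrow> 'k)"
  by unfold_locales (simp_all add: algebra_simps)

lemma lin_mult_const_left: "lin s (*) F \<Longrightarrow> lin s (*) (\<lambda>x. F x * (c::'k::field))"
  by (simp add: Vector_Spaces.linear_iff vector_space_field algebra_simps)

lemma lin_mult_const_right: "lin s (*) F \<Longrightarrow> lin s (*) (\<lambda>x. (c::'k::field) * F x)"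
  by (simp add: Vector_Spaces.linear_iff vector_space_field algebra_simps)

lemma scale_sum_list_left: "vector_space t \<Longrightarrow> t (\<Sum>x\<leftarrow>xs. c x) v = (\<Sum>x\<leftarrow>xs. t (c x) v)"
  by (induction xs)
    (simp_all add: module.scale_zero_left module.scale_left_distrib module_iff_vector_space)

lemma sum_list_sum_swap: "(\<Sum>x\<leftarrow>xs. \<Sum>e\<in>E. F x e) = (\<Sum>e\<in>E. \<Sum>x\<leftarrow>xs. F x e)"
  by (induction xs) (simp_all add: sum.distrib)

lemma sum_list_pairs_swap:
  fixes F :: "_ \<Rightarrow> _ \<Rightarrow> _ \<Rightarrow> _ \<Rightarrow> 'c::comm_monoid_add"
  shows "(\<Sum>(a, b) \<leftarrow> xs. \<Sum>(c, d) \<leftarrow> ys. F a b c d) = (\<Sum>(c, d) \<leftarrow> ys. \<Sum>(a, b) \<leftarrow> xs. F a b c d)"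
  by (induction xs) (simp_all add: sum_list_addf case_prod_beta')

lemma sum_list_map_concat: "sum_list (map f (concat xss)) = (\<Sum>xs\<leftarrow>xss. sum_list (map f xs))"
  by (induction xss) simp_all

section \<open>Comparing tensors by product functionals\<close>

lemma finite_coordinate_expansion:
  assumes vs: "vector_space s" and fin: "finite A"
  obtains E \<phi> where "finite E" "\<And>e. lin s (*) (\<phi> e)" "\<And>a. a \<in> A \<Longrightarrow> a = (\<Sum>e\<in>E. s (\<phi> e a) e)"
proof -
  interpret vector_space s by (rule vs)
  obtain B where B: "independent B" "UNIV \<subseteq> span B"
    using basis_exists[of UNIV] by blast
  define E where "E = (\<Union>a\<in>A. {b. representation B a b \<noteq> 0})"
  have "finite E"
    unfolding E_def using fin finite_representation by (intro finite_UN_I) auto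
  moreover have "lin s (*) (\<lambda>v. representation B v e)" for e
    using linear_representation[OF B(1)] B(2) by (simp add: top.extremum_unique)
  moreover have "a = (\<Sum>e\<in>E. s (representation B a e) e)" if "a \<in> A" for a
  proof -
    have "(\<Sum>e\<in>E. s (representation B a e) e) = (\<Sum>b | representation B a b \<noteq> 0. s (representation B a b) b)"
      using \<open>finite E\<close> that by (intro sum.mono_neutral_right) (auto simp: E_def)
    also have "\<dots> = a"
      using sum_nonzero_representation_eq[OF B(1)] B(2) by blast
    finally show ?thesis by simp
  qed
  ultimately show ?thesis
    using that[of E "\<lambda>e v. representation B v e"] by blast
qed

text \<open>Expanding each tensor factor in finitely many basis coordinates writes a bilinear (trilinear)
  map on a list of simple tensors as a combination of sums of products of coordinate functionals,
  which is exactly what teq2 (teq3) compares.\<close>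

lemma teq2_sum_bilinear_eq:
  assumes vsa: "vector_space sa" and vsb: "vector_space sb" and vsc: "vector_space sc"
    and teq: "teq2 sa sb xs ys" and bil: "bilinear_map sa sb sc g"
  shows "(\<Sum>(a, b)\<leftarrow>xs. g a b) = (\<Sum>(a, b)\<leftarrow>ys. g a b)"
proof -
  obtain E \<phi> where E: "finite E" "\<And>e. lin sa (*) (\<phi> e)"
      "\<And>a. a \<in> fst ` set (xs @ ys) \<Longrightarrow> a = (\<Sum>e\<in>E. sa (\<phi> e a) e)"
    using finite_coordinate_expansion[OF vsa, of "fst ` set (xs @ ys)"] by blast
  obtain F \<psi> where F: "finite F" "\<And>f. lin sb (*) (\<psi> f)"
      "\<And>b. b \<in> snd ` set (xs @ ys) \<Longrightarrow> b = (\<Sum>f\<in>F. sb (\<psi> f b) f)"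
    using finite_coordinate_expansion[OF vsb, of "snd ` set (xs @ ys)"] by blast
  have lin1: "lin sa sc (\<lambda>a. g a b)" and lin2: "lin sb sc (\<lambda>b. g a b)" for a b
    using bil by (simp_all add: bilinear_map_def)
  have expand: "g a b = (\<Sum>e\<in>E. \<Sum>f\<in>F. sc (\<phi> e a * \<psi> f b) (g e f))"
    if "(a, b) \<in> set (xs @ ys)" for a b
  proof -
    have "a \<in> fst ` set (xs @ ys)" "b \<in> snd ` set (xs @ ys)"
      using rev_image_eqI[OF that, of a fst] rev_image_eqI[OF that, of b snd] by simp_all
    then have "g a b = g (\<Sum>e\<in>E. sa (\<phi> e a) e) (\<Sum>f\<in>F. sb (\<psi> f b) f)"
      by (intro arg_cong2[where f=g] E(3) F(3))
    also have "\<dots> = (\<Sum>e\<in>E. \<Sum>f\<in>F. sc (\<phi> e a) (sc (\<psi> f b) (g e f)))"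
      by (simp only: lin_sum[OF lin1] lin_scale[OF lin1])
        (simp only: lin_sum[OF lin2] lin_scale[OF lin2] module.scale_sum_right[OF vector_space_module[OF vsc]])
    finally show ?thesis
      by (simp add: vector_space.vector_space_assms(3)[OF vsc])
  qed
  have sum_expand: "(\<Sum>(a, b)\<leftarrow>zs. g a b)
      = (\<Sum>e\<in>E. \<Sum>f\<in>F. sc (\<Sum>(a, b)\<leftarrow>zs. \<phi> e a * \<psi> f b) (g e f))"
    if "set zs \<subseteq> set (xs @ ys)" for zs
  proof -
    have "(\<Sum>(a, b)\<leftarrow>zs. g a b) = (\<Sum>(a, b)\<leftarrow>zs. \<Sum>e\<in>E. \<Sum>f\<in>F. sc (\<phi> e a * \<psi> f b) (g e f))"
      using that expand by (intro arg_cong[where f=sum_list] map_cong) auto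
    then show ?thesis
      by (simp add: sum_list_sum_swap scale_sum_list_left[OF vsc] case_prod_beta')
  qed
  have "(\<Sum>(a, b)\<leftarrow>xs. \<phi> e a * \<psi> f b) = (\<Sum>(a, b)\<leftarrow>ys. \<phi> e a * \<psi> f b)" for e f
    using teq E(2) F(2) by (simp add: teq2_def lin_functional_def)
  then show ?thesis
    using sum_expand[of xs] sum_expand[of ys] by simp
qed

definition trilinear_map :: "('k::field \<Rightarrow> 'a::ab_group_add \<Rightarrow> 'a) \<Rightarrow> ('k \<Rightarrow> 'c::ab_group_add \<Rightarrow> 'c)
    \<Rightarrow> ('a \<Rightarrow> 'a \<Rightarrow> 'a \<Rightarrow> 'c) \<Rightarrow> bool" where
  "trilinear_map s t G \<longleftrightarrow> (\<forall>b c. lin s t (\<lambda>a. G a b c)) \<and> (\<forall>a c. lin s t (\<lambda>b. G a b c))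
      \<and> (\<forall>a b. lin s t (\<lambda>c. G a b c))"

lemma teq3_sum_trilinear_eq:
  assumes vs: "vector_space s" and vst: "vector_space t"
    and teq: "teq3 s xs ys" and tri: "trilinear_map s t G"
  shows "(\<Sum>(a, b, c)\<leftarrow>xs. G a b c) = (\<Sum>(a, b, c)\<leftarrow>ys. G a b c)"
proof -
  define A where "A = fst ` set (xs @ ys) \<union> fst ` snd ` set (xs @ ys) \<union> snd ` snd ` set (xs @ ys)"
  obtain E \<phi> where E: "finite E" "\<And>e. lin s (*) (\<phi> e)" "\<And>a. a \<in> A \<Longrightarrow> a = (\<Sum>e\<in>E. s (\<phi> e a) e)"
    using finite_coordinate_expansion[OF vs, of A] unfolding A_def by auto
  have lin1: "lin s t (\<lambda>a. G a b c)" and lin2: "lin s t (\<lambda>b. G a b c)"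
    and lin3: "lin s t (\<lambda>c. G a b c)" for a b c
    using tri by (simp_all add: trilinear_map_def)
  have expand: "G a b c = (\<Sum>e\<in>E. \<Sum>f\<in>E. \<Sum>g\<in>E. t (\<phi> e a * \<phi> f b * \<phi> g c) (G e f g))"
    if "(a, b, c) \<in> set (xs @ ys)" for a b c
  proof -
    have "(b, c) \<in> snd ` set (xs @ ys)"
      using rev_image_eqI[OF that, of "(b, c)" snd] by simp
    then have abc: "a \<in> A" "b \<in> A" "c \<in> A"
      unfolding A_def using rev_image_eqI[OF that, of a fst] by (auto intro: rev_image_eqI)
    have "G a b c = G (\<Sum>e\<in>E. s (\<phi> e a) e) (\<Sum>f\<in>E. s (\<phi> f b) f) (\<Sum>g\<in>E. s (\<phi> g c) g)"
      by (simp only: E(3)[OF abc(1), symmetric] E(3)[OF abc(2), symmetric] E(3)[OF abc(3), symmetric])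
    also have "\<dots> = (\<Sum>e\<in>E. \<Sum>f\<in>E. \<Sum>g\<in>E. t (\<phi> e a) (t (\<phi> f b) (t (\<phi> g c) (G e f g))))"
      by (simp only: lin_sum[OF lin1] lin_scale[OF lin1])
        (simp only: lin_sum[OF lin2] lin_scale[OF lin2] module.scale_sum_right[OF vector_space_module[OF vst]],
         simp only: lin_sum[OF lin3] lin_scale[OF lin3] module.scale_sum_right[OF vector_space_module[OF vst]])
    finally show ?thesis
      by (simp add: vector_space.vector_space_assms(3)[OF vst] mult.assoc)
  qed
  have sum_expand: "(\<Sum>(a, b, c)\<leftarrow>zs. G a b c)
      = (\<Sum>e\<in>E. \<Sum>f\<in>E. \<Sum>g\<in>E. t (\<Sum>(a, b, c)\<leftarrow>zs. \<phi> e a * \<phi> f b * \<phi> g c) (G e f g))"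
    if "set zs \<subseteq> set (xs @ ys)" for zs
  proof -
    have "(\<Sum>(a, b, c)\<leftarrow>zs. G a b c)
        = (\<Sum>(a, b, c)\<leftarrow>zs. \<Sum>e\<in>E. \<Sum>f\<in>E. \<Sum>g\<in>E. t (\<phi> e a * \<phi> f b * \<phi> g c) (G e f g))"
      using that expand by (intro arg_cong[where f=sum_list] map_cong) auto
    then show ?thesis
      by (simp add: sum_list_sum_swap scale_sum_list_left[OF vst] case_prod_beta')
  qed
  have "(\<Sum>(a, b, c)\<leftarrow>xs. \<phi> e a * \<phi> f b * \<phi> g c) = (\<Sum>(a, b, c)\<leftarrow>ys. \<phi> e a * \<phi> f b * \<phi> g c)" for e f g
    using teq E(2) by (simp add: teq3_def lin_functional_def)
  then show ?thesis
    using sum_expand[of xs] sum_expand[of ys] by simp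
qed

section \<open>Sweedler calculus in a cocommutative Hopf algebra\<close>

context
  fixes H :: "('k::field, 'a::ab_group_add) hopf"
  assumes cc: "cc_hopf H"
begin

lemma cc_vector_space: "vector_space (hscale H)"
  using cc by (simp add: cc_hopf_def Let_def)
lemma cc_mult_bilinear: "bilinear_map (hscale H) (hscale H) (hscale H) (hmult H)"
  using cc by (simp add: cc_hopf_def Let_def)
lemma cc_mult_assoc: "hmult H (hmult H x y) z = hmult H x (hmult H y z)"
  using cc by (simp add: cc_hopf_def Let_def)
lemma cc_mult_unit_left: "hmult H (hunit H) x = x"
  using cc by (simp add: cc_hopf_def Let_def)
lemma cc_mult_unit_right: "hmult H x (hunit H) = x"
  using cc by (simp add: cc_hopf_def Let_def)
lemma cc_coassoc: "teq3 (hscale H) [(a, b1, b2). (a, b) \<leftarrow> hcomult H x, (b1, b2) \<leftarrow> hcomult H b]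
    [(a1, a2, b). (a, b) \<leftarrow> hcomult H x, (a1, a2) \<leftarrow> hcomult H a]"
  using cc by (simp add: cc_hopf_def Let_def)
lemma cc_counit_right: "(\<Sum>(a, b) \<leftarrow> hcomult H x. hscale H (hcounit H b) a) = x"
  using cc by (simp add: cc_hopf_def Let_def)
lemma cc_comult_unit: "teq2 (hscale H) (hscale H) (hcomult H (hunit H)) [(hunit H, hunit H)]"
  using cc by (simp add: cc_hopf_def Let_def)
lemma cc_counit_unit: "hcounit H (hunit H) = 1"
  using cc by (simp add: cc_hopf_def Let_def)
lemma cc_antipode_linear: "lin (hscale H) (hscale H) (hantipode H)"
  using cc by (simp add: cc_hopf_def Let_def)
lemma cc_antipode_right: "(\<Sum>(a, b) \<leftarrow> hcomult H x. hmult H a (hantipode H b)) = hscale H (hcounit H x) (hunit H)"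
  using cc by (simp add: cc_hopf_def Let_def)
lemma cc_antipode_left: "(\<Sum>(a, b) \<leftarrow> hcomult H x. hmult H (hantipode H a) b) = hscale H (hcounit H x) (hunit H)"
  using cc by (simp add: cc_hopf_def Let_def)
lemma cc_cocomm: "teq2 (hscale H) (hscale H) (hcomult H x) (map (\<lambda>(a, b). (b, a)) (hcomult H x))"
  using cc by (simp add: cc_hopf_def Let_def)

lemma cc_mult_linear_left: "lin (hscale H) (hscale H) (\<lambda>x. hmult H x y)"
  using cc_mult_bilinear by (simp add: bilinear_map_def)
lemma cc_mult_linear_right: "lin (hscale H) (hscale H) (\<lambda>y. hmult H x y)"
  using cc_mult_bilinear by (simp add: bilinear_map_def)

lemma sum_comult_coassoc:
  assumes "trilinear_map (hscale H) t G" and "vector_space t"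
  shows "(\<Sum>(a, b) \<leftarrow> hcomult H x. \<Sum>(c, d) \<leftarrow> hcomult H b. G a c d)
       = (\<Sum>(a, b) \<leftarrow> hcomult H x. \<Sum>(c, d) \<leftarrow> hcomult H a. G c d b)"
  using teq3_sum_trilinear_eq[OF cc_vector_space assms(2) cc_coassoc assms(1), of x]
  by (simp add: sum_list_map_concat case_prod_beta' o_def)

lemma sum_comult_cocomm:
  assumes "bilinear_map (hscale H) (hscale H) t g" and "vector_space t"
  shows "(\<Sum>(a, b) \<leftarrow> hcomult H x. g a b) = (\<Sum>(a, b) \<leftarrow> hcomult H x. g b a)"
  using teq2_sum_bilinear_eq[OF cc_vector_space cc_vector_space assms(2) cc_cocomm assms(1), of x]
  by (simp add: case_prod_beta' o_def)

lemma sum_comult_counit_right: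
  assumes F: "lin (hscale H) t F"
  shows "(\<Sum>(a, b) \<leftarrow> hcomult H x. t (hcounit H b) (F a)) = F x"
proof -
  have "F x = (\<Sum>(a, b) \<leftarrow> hcomult H x. F (hscale H (hcounit H b) a))"
    by (subst cc_counit_right[symmetric]) (simp add: lin_sum_list[OF F] case_prod_beta')
  then show ?thesis
    by (simp add: lin_scale[OF F] case_prod_beta')
qed

lemma sum_comult_antipode_left:
  assumes F: "lin (hscale H) t F"
  shows "(\<Sum>(a, b) \<leftarrow> hcomult H x. F (hmult H (hantipode H a) b)) = t (hcounit H x) (F (hunit H))"
proof -
  have "(\<Sum>(a, b) \<leftarrow> hcomult H x. F (hmult H (hantipode H a) b))
      = F (\<Sum>(a, b) \<leftarrow> hcomult H x. hmult H (hantipode H a) b)"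
    by (simp add: lin_sum_list[OF F] case_prod_beta')
  then show ?thesis
    by (simp add: cc_antipode_left lin_scale[OF F])
qed

lemma sum_comult_unit:
  assumes "bilinear_map (hscale H) (hscale H) t g" and "vector_space t"
  shows "(\<Sum>(a, b) \<leftarrow> hcomult H (hunit H). g a b) = g (hunit H) (hunit H)"
  using teq2_sum_bilinear_eq[OF cc_vector_space cc_vector_space assms(2) cc_comult_unit assms(1)] by simp

lemma antipode_unit: "hantipode H (hunit H) = hunit H"
proof -
  have "bilinear_map (hscale H) (hscale H) (hscale H) (\<lambda>a b. hmult H a (hantipode H b))"
    unfolding bilinear_map_def
    using cc_mult_linear_left lin_comp[OF cc_mult_linear_right cc_antipode_linear] by blast
  then have "(\<Sum>(a, b) \<leftarrow> hcomult H (hunit H). hmult H a (hantipode H b)) = hmult H (hunit H) (hantipode H (hunit H))"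
    by (rule sum_comult_unit[OF _ cc_vector_space])
  then show ?thesis
    by (simp add: cc_antipode_right cc_mult_unit_left cc_counit_unit vector_space.vector_space_assms(4)[OF cc_vector_space])
qed

lemma sum_comult_swap_last:
  assumes tri: "trilinear_map (hscale H) t G" and vst: "vector_space t"
  shows "(\<Sum>(x1, x2) \<leftarrow> hcomult H x. \<Sum>(a, b) \<leftarrow> hcomult H x1. G a b x2)
       = (\<Sum>(x1, x2) \<leftarrow> hcomult H x. \<Sum>(a, b) \<leftarrow> hcomult H x1. G a x2 b)"
proof -
  have tri': "trilinear_map (hscale H) t (\<lambda>a b c. G a c b)"
    using tri by (simp add: trilinear_map_def)
  have bil: "bilinear_map (hscale H) (hscale H) t (\<lambda>b c. G a b c)" for a
    using tri by (simp add: trilinear_map_def bilinear_map_def)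
  have "(\<Sum>(x1, x2) \<leftarrow> hcomult H x. \<Sum>(a, b) \<leftarrow> hcomult H x1. G a b x2)
      = (\<Sum>(a, z) \<leftarrow> hcomult H x. \<Sum>(b, x2) \<leftarrow> hcomult H z. G a b x2)"
    by (rule sum_comult_coassoc[OF tri vst, symmetric])
  also have "\<dots> = (\<Sum>(a, z) \<leftarrow> hcomult H x. \<Sum>(b, x2) \<leftarrow> hcomult H z. G a x2 b)"
    by (simp only: sum_comult_cocomm[OF bil vst])
  also have "\<dots> = (\<Sum>(x1, x2) \<leftarrow> hcomult H x. \<Sum>(a, b) \<leftarrow> hcomult H x1. G a x2 b)"
    by (rule sum_comult_coassoc[OF tri' vst])
  finally show ?thesis .
qed

end

lemma hopf_morphism_linear: "hopf_morphism X Y f \<Longrightarrow> lin (hscale X) (hscale Y) f"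
  by (simp add: hopf_morphism_def)
lemma hopf_morphism_mult: "hopf_morphism X Y f \<Longrightarrow> f (hmult X x y) = hmult Y (f x) (f y)"
  by (simp add: hopf_morphism_def)
lemma hopf_morphism_unit: "hopf_morphism X Y f \<Longrightarrow> f (hunit X) = hunit Y"
  by (simp add: hopf_morphism_def)
lemma hopf_morphism_comult: "hopf_morphism X Y f \<Longrightarrow>
    teq2 (hscale Y) (hscale Y) (hcomult Y (f x)) (map (\<lambda>(a, b). (f a, f b)) (hcomult X x))"
  by (simp add: hopf_morphism_def)
lemma hopf_morphism_counit: "hopf_morphism X Y f \<Longrightarrow> hcounit Y (f x) = hcounit X x"
  by (simp add: hopf_morphism_def)

lemma hopf_morphism_id: "cc_hopf H \<Longrightarrow> hopf_morphism H H (\<lambda>x. x)"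
  by (simp add: hopf_morphism_def lin_id cc_vector_space teq2_def case_prod_beta')

lemma sum_comult_hom:
  assumes f: "hopf_morphism X Y f" and ccY: "cc_hopf Y"
    and bil: "bilinear_map (hscale Y) (hscale Y) t g" and vst: "vector_space t"
  shows "(\<Sum>(a, b) \<leftarrow> hcomult Y (f x). g a b) = (\<Sum>(a, b) \<leftarrow> hcomult X x. g (f a) (f b))"
  using teq2_sum_bilinear_eq[OF cc_vector_space[OF ccY] cc_vector_space[OF ccY] vst hopf_morphism_comult[OF f] bil, of x]
  by (simp add: case_prod_beta' o_def)

lemma module_linear_left: "module_hopf B X act \<Longrightarrow> lin (hscale B) (hscale X) (\<lambda>b. act b x)"
  by (simp add: module_hopf_def bilinear_map_def)
lemma module_linear_right: "module_hopf B X act \<Longrightarrow> lin (hscale X) (hscale X) (\<lambda>x. act b x)"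
  by (simp add: module_hopf_def bilinear_map_def)
lemma module_act_mult: "module_hopf B X act \<Longrightarrow> act (hmult B b b') x = act b (act b' x)"
  by (simp add: module_hopf_def)
lemma module_act_unit: "module_hopf B X act \<Longrightarrow> act (hunit B) x = x"
  by (simp add: module_hopf_def)
lemma module_act_hmult: "module_hopf B X act \<Longrightarrow>
    act b (hmult X x y) = (\<Sum>(b1, b2) \<leftarrow> hcomult B b. hmult X (act b1 x) (act b2 y))"
  by (simp add: module_hopf_def)
lemma module_act_hunit: "module_hopf B X act \<Longrightarrow> act b (hunit X) = hscale X (hcounit B b) (hunit X)"
  by (simp add: module_hopf_def)
lemma module_act_comult: "module_hopf B X act \<Longrightarrow> teq2 (hscale X) (hscale X) (hcomult X (act b x))
    [(act b1 x1, act b2 x2). (b1, b2) \<leftarrow> hcomult B b, (x1, x2) \<leftarrow> hcomult X x]"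
  by (simp add: module_hopf_def)

lemma crossed_module_boundary_act: "hopf_crossed_module B X act d \<Longrightarrow>
    d (act b x) = (\<Sum>(b1, b2) \<leftarrow> hcomult B b. hmult B (hmult B b1 (d x)) (hantipode B b2))"
  by (simp add: hopf_crossed_module_def)
lemma crossed_module_act_boundary: "hopf_crossed_module B X act d \<Longrightarrow>
    act (d y) x = (\<Sum>(y1, y2) \<leftarrow> hcomult X y. hmult X (hmult X y1 x) (hantipode X y2))"
  by (simp add: hopf_crossed_module_def)

lemma coalg_map2_linear_left: "coalg_map2 M N L h \<Longrightarrow> lin (hscale M) (hscale L) (\<lambda>m. h m n)"
  by (simp add: coalg_map2_def bilinear_map_def)
lemma coalg_map2_linear_right: "coalg_map2 M N L h \<Longrightarrow> lin (hscale N) (hscale L) (\<lambda>n. h m n)"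
  by (simp add: coalg_map2_def bilinear_map_def)

lemma sum_comult_coalg_map2:
  assumes co: "coalg_map2 M N L h" and ccL: "cc_hopf L"
    and bil: "bilinear_map (hscale L) (hscale L) t g" and vst: "vector_space t"
  shows "(\<Sum>(a, b) \<leftarrow> hcomult L (h m n). g a b)
      = (\<Sum>(m1, m2) \<leftarrow> hcomult M m. \<Sum>(n1, n2) \<leftarrow> hcomult N n. g (h m1 n1) (h m2 n2))"
proof -
  have "teq2 (hscale L) (hscale L) (hcomult L (h m n))
      [(h m1 n1, h m2 n2). (m1, m2) \<leftarrow> hcomult M m, (n1, n2) \<leftarrow> hcomult N n]"
    using co by (simp add: coalg_map2_def)
  from teq2_sum_bilinear_eq[OF cc_vector_space[OF ccL] cc_vector_space[OF ccL] vst this bil] show ?thesis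
    by (simp add: sum_list_map_concat case_prod_beta' o_def)
qed

lemma bilinear_mapI:
  "(\<And>b. lin sa sc (\<lambda>a. g a b)) \<Longrightarrow> (\<And>a. lin sb sc (\<lambda>b. g a b)) \<Longrightarrow> bilinear_map sa sb sc g"
  by (simp add: bilinear_map_def)

lemma trilinear_mapI:
  "(\<And>b c. lin s t (\<lambda>a. G a b c)) \<Longrightarrow> (\<And>a c. lin s t (\<lambda>b. G a b c)) \<Longrightarrow> (\<And>a b. lin s t (\<lambda>c. G a b c))
   \<Longrightarrow> trilinear_map s t G"
  by (simp add: trilinear_map_def)

lemma lin_mult_left_comp: "cc_hopf H \<Longrightarrow> lin s (hscale H) F \<Longrightarrow> lin s (hscale H) (\<lambda>x. hmult H (F x) c)"
  by (rule lin_comp[OF cc_mult_linear_left])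
lemma lin_mult_right_comp: "cc_hopf H \<Longrightarrow> lin s (hscale H) F \<Longrightarrow> lin s (hscale H) (\<lambda>x. hmult H c (F x))"
  by (rule lin_comp[OF cc_mult_linear_right])
lemma lin_antipode_comp: "cc_hopf H \<Longrightarrow> lin s (hscale H) F \<Longrightarrow> lin s (hscale H) (\<lambda>x. hantipode H (F x))"
  by (rule lin_comp[OF cc_antipode_linear])
lemma lin_hom_comp: "hopf_morphism X Y f \<Longrightarrow> lin s (hscale X) F \<Longrightarrow> lin s (hscale Y) (\<lambda>x. f (F x))"
  by (rule lin_comp[OF hopf_morphism_linear])
lemma lin_act_left_comp: "module_hopf B X act \<Longrightarrow> lin s (hscale B) F \<Longrightarrow> lin s (hscale X) (\<lambda>x. act (F x) c)"
  by (rule lin_comp[OF module_linear_left])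
lemma lin_act_right_comp: "module_hopf B X act \<Longrightarrow> lin s (hscale X) F \<Longrightarrow> lin s (hscale X) (\<lambda>x. act c (F x))"
  by (rule lin_comp[OF module_linear_right])
lemma lin_coalg_map2_left_comp: "coalg_map2 M N L h \<Longrightarrow> lin s (hscale M) F \<Longrightarrow> lin s (hscale L) (\<lambda>x. h (F x) c)"
  by (rule lin_comp[OF coalg_map2_linear_left])
lemma lin_coalg_map2_right_comp: "coalg_map2 M N L h \<Longrightarrow> lin s (hscale N) F \<Longrightarrow> lin s (hscale L) (\<lambda>x. h c (F x))"
  by (rule lin_comp[OF coalg_map2_linear_right])

section \<open>Antipode cancellation, pullback actions and crossed modules\<close>

lemma sum_comult_antipode_cancel:
  assumes f: "hopf_morphism N P f" and ccN: "cc_hopf N" and ccP: "cc_hopf P"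
    and bil: "bilinear_map (hscale P) (hscale P) t G" and vst: "vector_space t"
  shows "(\<Sum>(a, b) \<leftarrow> hcomult N x. \<Sum>(c, d) \<leftarrow> hcomult N a. G (f c) (hmult P (hantipode P (f d)) (f b)))
       = G (f x) (hunit P)"
proof -
  have G1: "lin (hscale P) t (\<lambda>p. G p q)" and G2: "lin (hscale P) t (\<lambda>q. G p q)" for p q
    using bil by (simp_all add: bilinear_map_def)
  note vs = cc_vector_space[OF ccN] cc_vector_space[OF ccP] vst
  note lin_rules = lin_id lin_comp[OF G1] lin_comp[OF G2] lin_hom_comp[OF f]
    lin_mult_left_comp[OF ccP] lin_mult_right_comp[OF ccP] lin_antipode_comp[OF ccP]
  have "(\<Sum>(a, b) \<leftarrow> hcomult N x. \<Sum>(c, d) \<leftarrow> hcomult N a. G (f c) (hmult P (hantipode P (f d)) (f b)))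
      = (\<Sum>(c, z) \<leftarrow> hcomult N x. \<Sum>(d, b) \<leftarrow> hcomult N z. G (f c) (hmult P (hantipode P (f d)) (f b)))"
    by (rule sum_comult_coassoc[OF ccN _ vst, symmetric]) (intro trilinear_mapI lin_rules vs)
  also have "\<dots> = (\<Sum>(c, z) \<leftarrow> hcomult N x. \<Sum>(p, q) \<leftarrow> hcomult P (f z). G (f c) (hmult P (hantipode P p) q))"
    by (rule arg_cong[where f=sum_list], rule map_cong[OF refl], clarify,
        rule sum_comult_hom[OF f ccP _ vst, symmetric], intro bilinear_mapI lin_rules vs)
  also have "\<dots> = (\<Sum>(c, z) \<leftarrow> hcomult N x. t (hcounit N z) (G (f c) (hunit P)))"
    by (subst sum_comult_antipode_left[OF ccP, where t=t]) (intro lin_rules vs, simp add: hopf_morphism_counit[OF f])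
  also have "\<dots> = G (f x) (hunit P)"
    by (rule sum_comult_counit_right[OF ccN]) (intro lin_rules vs)
  finally show ?thesis .
qed

lemma module_hopf_pullback:
  assumes act: "module_hopf P L act" and f: "hopf_morphism M P f"
    and ccM: "cc_hopf M" and ccP: "cc_hopf P" and ccL: "cc_hopf L"
  shows "module_hopf M L (\<lambda>m l. act (f m) l)"
proof -
  note vs = cc_vector_space[OF ccM] cc_vector_space[OF ccP] cc_vector_space[OF ccL] vector_space_field
  note lin_rules = lin_id lin_act_left_comp[OF act] lin_act_right_comp[OF act] lin_hom_comp[OF f]
    lin_mult_left_comp[OF ccL] lin_mult_right_comp[OF ccL]
  have hmult: "act (f m) (hmult L x y) = (\<Sum>(m1, m2) \<leftarrow> hcomult M m. hmult L (act (f m1) x) (act (f m2) y))" for m x y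
    by (simp only: module_act_hmult[OF act])
      (rule sum_comult_hom[OF f ccP _ vs(3)], intro bilinear_mapI lin_rules vs)
  have comult: "teq2 (hscale L) (hscale L) (hcomult L (act (f m) x))
      [(act (f m1) x1, act (f m2) x2). (m1, m2) \<leftarrow> hcomult M m, (x1, x2) \<leftarrow> hcomult L x]" for m x
    unfolding teq2_def
  proof (intro allI impI)
    fix \<phi> \<psi>
    assume functionals: "lin_functional (hscale L) \<phi> \<and> lin_functional (hscale L) \<psi>"
    then have \<phi>: "lin (hscale L) (*) \<phi>" and \<psi>: "lin (hscale L) (*) \<psi>"
      by (simp_all add: lin_functional_def)
    have "(\<Sum>(a, b) \<leftarrow> hcomult L (act (f m) x). \<phi> a * \<psi> b)
       = (\<Sum>(p1, p2) \<leftarrow> hcomult P (f m). \<Sum>(x1, x2) \<leftarrow> hcomult L x. \<phi> (act p1 x1) * \<psi> (act p2 x2))"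
      using module_act_comult[OF act, of "f m" x] functionals unfolding teq2_def
      by (simp add: sum_list_map_concat case_prod_beta' o_def)
    also have "\<dots> = (\<Sum>(m1, m2) \<leftarrow> hcomult M m. \<Sum>(x1, x2) \<leftarrow> hcomult L x. \<phi> (act (f m1) x1) * \<psi> (act (f m2) x2))"
      by (rule sum_comult_hom[OF f ccP _ vs(4)])
        (intro bilinear_mapI lin_rules vs lin_sum_list_fun lin_mult_const_left lin_mult_const_right
          lin_comp[OF \<phi>] lin_comp[OF \<psi>])
    finally show "(\<Sum>(a, b) \<leftarrow> hcomult L (act (f m) x). \<phi> a * \<psi> b)
       = (\<Sum>(a, b) \<leftarrow> [(act (f m1) x1, act (f m2) x2). (m1, m2) \<leftarrow> hcomult M m, (x1, x2) \<leftarrow> hcomult L x]. \<phi> a * \<psi> b)"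
      by (simp add: sum_list_map_concat case_prod_beta' o_def)
  qed
  have "bilinear_map (hscale M) (hscale L) (hscale L) (\<lambda>m l. act (f m) l)"
    by (intro bilinear_mapI lin_rules vs)
  with hmult comult act f show ?thesis
    unfolding module_hopf_def hopf_morphism_def by simp
qed

lemma pullback_act_equivariant:
  assumes cm: "hopf_crossed_module P M actM d" and act: "module_hopf P L actL"
    and ccP: "cc_hopf P" and ccL: "cc_hopf L"
  shows "(\<Sum>(p1, p2) \<leftarrow> hcomult P p. actL (d (actM p1 m)) (actL p2 l)) = actL p (actL (d m) l)"
proof -
  note vs = cc_vector_space[OF ccP] cc_vector_space[OF ccL]
  note lin_rules = lin_id lin_act_left_comp[OF act] lin_act_right_comp[OF act]
    lin_mult_left_comp[OF ccP] lin_mult_right_comp[OF ccP] lin_antipode_comp[OF ccP]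
  let ?S = "hantipode P" and ?m = "hmult P"
  have "(\<Sum>(p1, p2) \<leftarrow> hcomult P p. actL (d (actM p1 m)) (actL p2 l))
     = (\<Sum>(p1, p2) \<leftarrow> hcomult P p. \<Sum>(a, b) \<leftarrow> hcomult P p1. actL (?m (?m a (d m)) (?S b)) (actL p2 l))"
    by (simp add: crossed_module_boundary_act[OF cm] lin_sum_list[OF module_linear_left[OF act]] case_prod_beta')
  also have "\<dots> = (\<Sum>(a, z) \<leftarrow> hcomult P p. \<Sum>(b, p2) \<leftarrow> hcomult P z. actL (?m a (d m)) (actL (?m (?S b) p2) l))"
    by (subst sum_comult_coassoc[OF ccP _ vs(2), symmetric])
      (intro trilinear_mapI lin_rules vs, simp add: module_act_mult[OF act])
  also have "\<dots> = (\<Sum>(a, z) \<leftarrow> hcomult P p. hscale L (hcounit P z) (actL (?m a (d m)) l))"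
    by (subst sum_comult_antipode_left[OF ccP, where t="hscale L"])
      (intro lin_rules vs, simp add: module_act_unit[OF act])
  also have "\<dots> = actL p (actL (d m) l)"
    by (subst sum_comult_counit_right[OF ccP]) (intro lin_rules vs, simp add: module_act_mult[OF act])
  finally show ?thesis .
qed

lemma crossed_module_mult_eq_sum_act:
  assumes cm: "hopf_crossed_module B X act d" and ccX: "cc_hopf X"
  shows "hmult X y x = (\<Sum>(y1, y2) \<leftarrow> hcomult X y. hmult X (act (d y1) x) y2)"
proof -
  note lin_rules = lin_id lin_mult_left_comp[OF ccX] lin_mult_right_comp[OF ccX] lin_antipode_comp[OF ccX]
  let ?m = "hmult X" and ?S = "hantipode X"
  have "(\<Sum>(y1, y2) \<leftarrow> hcomult X y. ?m (act (d y1) x) y2)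
      = (\<Sum>(y1, y2) \<leftarrow> hcomult X y. \<Sum>(a, b) \<leftarrow> hcomult X y1. ?m (?m (?m a x) (?S b)) y2)"
    by (simp add: crossed_module_act_boundary[OF cm] lin_sum_list[OF cc_mult_linear_left[OF ccX]] case_prod_beta')
  also have "\<dots> = (\<Sum>(a, z) \<leftarrow> hcomult X y. \<Sum>(b, y2) \<leftarrow> hcomult X z. ?m (?m (?m a x) (?S b)) y2)"
    by (rule sum_comult_coassoc[OF ccX _ cc_vector_space[OF ccX], symmetric])
      (intro trilinear_mapI lin_rules cc_vector_space[OF ccX])
  also have "\<dots> = (\<Sum>(a, z) \<leftarrow> hcomult X y. \<Sum>(b, y2) \<leftarrow> hcomult X z. ?m (?m a x) (?m (?S b) y2))"
    by (simp add: cc_mult_assoc[OF ccX])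
  also have "\<dots> = (\<Sum>(a, z) \<leftarrow> hcomult X y. hscale X (hcounit X z) (?m a x))"
    by (subst sum_comult_antipode_left[OF ccX, where t="hscale X"])
      (intro lin_rules cc_vector_space[OF ccX], simp add: cc_mult_unit_right[OF ccX])
  also have "\<dots> = ?m y x"
    by (rule sum_comult_counit_right[OF ccX]) (intro lin_rules cc_vector_space[OF ccX])
  finally show ?thesis by simp
qed

section \<open>From a Hopf crossed square to a Hopf 2-action\<close>

locale crossed_square =
  fixes L :: "('k::field, 'l::ab_group_add) hopf" and M :: "('k, 'm::ab_group_add) hopf"
    and N :: "('k, 'n::ab_group_add) hopf" and P :: "('k, 'p::ab_group_add) hopf"
    and actL :: "'p \<Rightarrow> 'l \<Rightarrow> 'l" and actM :: "'p \<Rightarrow> 'm \<Rightarrow> 'm" and actN :: "'p \<Rightarrow> 'n \<Rightarrow> 'n"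
    and h :: "'m \<Rightarrow> 'n \<Rightarrow> 'l" and lam :: "'l \<Rightarrow> 'm" and lam' :: "'l \<Rightarrow> 'n"
    and mu :: "'m \<Rightarrow> 'p" and nu :: "'n \<Rightarrow> 'p"
  assumes crossed_square: "hopf_crossed_square L M N P actL actM actN h lam lam' mu nu"
begin

lemma ccL: "cc_hopf L" and ccM: "cc_hopf M" and ccN: "cc_hopf N" and ccP: "cc_hopf P"
  and lam: "hopf_morphism L M lam" and lam': "hopf_morphism L N lam'"
  and mu: "hopf_morphism M P mu" and nu: "hopf_morphism N P nu"
  and actL: "module_hopf P L actL" and h: "coalg_map2 M N L h"
  and cmM: "hopf_crossed_module P M actM mu" and cmN: "hopf_crossed_module P N actN nu"
  and cmL: "hopf_crossed_module P L actL (mu \<circ> lam)"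
  and CS4: "lam (h m n) = (\<Sum>(m1, m2) \<leftarrow> hcomult M m. hmult M m1 (actM (nu n) (hantipode M m2)))"
  and CS5_left: "h (lam l) n = (\<Sum>(l1, l2) \<leftarrow> hcomult L l. hmult L l1 (actL (nu n) (hantipode L l2)))"
  and CS5_right: "h m (lam' l) = (\<Sum>(l1, l2) \<leftarrow> hcomult L l. hmult L (actL (mu m) l1) (hantipode L l2))"
  using crossed_square by (simp_all add: hopf_crossed_square_def)

lemmas vector_spaces = cc_vector_space[OF ccL] cc_vector_space[OF ccM] cc_vector_space[OF ccN] cc_vector_space[OF ccP]

lemmas lin_rules = lin_id lin_sum_list_fun
  lin_act_left_comp[OF actL] lin_act_right_comp[OF actL] lin_hom_comp[OF mu] lin_hom_comp[OF nu]
  lin_hom_comp[OF lam] lin_mult_left_comp[OF ccL] lin_mult_right_comp[OF ccL]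
  lin_mult_left_comp[OF ccM] lin_mult_right_comp[OF ccM] lin_mult_left_comp[OF ccP] lin_mult_right_comp[OF ccP]
  lin_antipode_comp[OF ccL] lin_antipode_comp[OF ccM] lin_antipode_comp[OF ccP]
  lin_coalg_map2_left_comp[OF h] lin_coalg_map2_right_comp[OF h]

lemma h_unit_left: "h (hunit M) n = hscale L (hcounit N n) (hunit L)"
proof -
  have "h (hunit M) n = (\<Sum>(l1, l2) \<leftarrow> hcomult L (hunit L). hmult L l1 (actL (nu n) (hantipode L l2)))"
    by (simp add: CS5_left[symmetric] hopf_morphism_unit[OF lam])
  also have "\<dots> = hmult L (hunit L) (actL (nu n) (hantipode L (hunit L)))"
    by (rule sum_comult_unit[OF ccL _ vector_spaces(1)]) (intro bilinear_mapI lin_rules vector_spaces)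
  finally show ?thesis
    by (simp add: antipode_unit[OF ccL] cc_mult_unit_left[OF ccL] module_act_hunit[OF actL]
        hopf_morphism_counit[OF nu])
qed

lemma h_unit_right: "h m (hunit N) = hscale L (hcounit M m) (hunit L)"
proof -
  have "h m (hunit N) = (\<Sum>(l1, l2) \<leftarrow> hcomult L (hunit L). hmult L (actL (mu m) l1) (hantipode L l2))"
    by (simp add: CS5_right[symmetric] hopf_morphism_unit[OF lam'])
  also have "\<dots> = hmult L (actL (mu m) (hunit L)) (hantipode L (hunit L))"
    by (rule sum_comult_unit[OF ccL _ vector_spaces(1)]) (intro bilinear_mapI lin_rules vector_spaces)
  finally show ?thesis
    by (simp add: antipode_unit[OF ccL] cc_mult_unit_right[OF ccL] module_act_hunit[OF actL]
        hopf_morphism_counit[OF mu])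
qed

text \<open>By CS4 and the crossed module axiom of $\mu$,
  $\mu\lambda h(m \otimes n) = \mu(m_1)\,\nu(n_1)\,\mu(S m_2)\,S\nu(n_2)$.\<close>

lemma act_boundary_h: "actL (mu (lam (h m n))) l = (\<Sum>(m1, m2) \<leftarrow> hcomult M m. \<Sum>(n1, n2) \<leftarrow> hcomult N n.
    actL (mu m1) (actL (nu n1) (actL (mu (hantipode M m2)) (actL (hantipode P (nu n2)) l))))"
proof -
  have mu_actM: "mu (actM (nu n) z)
      = (\<Sum>(n1, n2) \<leftarrow> hcomult N n. hmult P (hmult P (nu n1) (mu z)) (hantipode P (nu n2)))" for z
    by (simp only: crossed_module_boundary_act[OF cmM])
      (rule sum_comult_hom[OF nu ccP _ vector_spaces(4)], intro bilinear_mapI lin_rules vector_spaces)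
  have "mu (lam (h m n)) = (\<Sum>(m1, m2) \<leftarrow> hcomult M m. hmult P (mu m1)
      (\<Sum>(n1, n2) \<leftarrow> hcomult N n. hmult P (hmult P (nu n1) (mu (hantipode M m2))) (hantipode P (nu n2))))"
    by (simp add: CS4 lin_sum_list[OF hopf_morphism_linear[OF mu]] hopf_morphism_mult[OF mu] mu_actM
        case_prod_beta')
  then show ?thesis
    by (simp add: lin_sum_list[OF module_linear_left[OF actL]] lin_sum_list[OF module_linear_right[OF actL]]
        module_act_mult[OF actL] case_prod_beta')
qed

lemma act_boundary_h_cancel: "(\<Sum>(m1, m2) \<leftarrow> hcomult M m. \<Sum>(n1, n2) \<leftarrow> hcomult N n.
    actL (mu (lam (h m1 n1))) (actL (nu n2) (actL (mu m2) l))) = actL (mu m) (actL (nu n) l)"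
proof -
  have cancel_N: "(\<Sum>(n1, n2) \<leftarrow> hcomult N n. \<Sum>(c1, c2) \<leftarrow> hcomult N n1.
      actL p (actL (nu c1) (actL q (actL (hantipode P (nu c2)) (actL (nu n2) l')))))
    = actL p (actL (nu n) (actL q l'))" for p q l'
  proof -
    have "bilinear_map (hscale P) (hscale P) (hscale L) (\<lambda>a b. actL p (actL a (actL q (actL b l'))))"
      by (intro bilinear_mapI lin_rules vector_spaces)
    from sum_comult_antipode_cancel[OF nu ccN ccP this vector_spaces(1), of n] show ?thesis
      by (simp add: module_act_mult[OF actL] module_act_unit[OF actL])
  qed
  have cancel_M: "(\<Sum>(m1, m2) \<leftarrow> hcomult M m. \<Sum>(c1, c2) \<leftarrow> hcomult M m1.
      actL (mu c1) (actL p (actL (mu (hantipode M c2)) (actL (mu m2) l'))))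
    = actL (mu m) (actL p l')" for p l'
  proof -
    have "bilinear_map (hscale M) (hscale M) (hscale L) (\<lambda>a b. actL (mu a) (actL p (actL (mu b) l')))"
      by (intro bilinear_mapI lin_rules vector_spaces)
    from sum_comult_antipode_cancel[OF hopf_morphism_id[OF ccM] ccM ccM this vector_spaces(1), of m] show ?thesis
      by (simp add: hopf_morphism_mult[OF mu] hopf_morphism_unit[OF mu] module_act_mult[OF actL]
          module_act_unit[OF actL])
  qed
  have "(\<Sum>(m1, m2) \<leftarrow> hcomult M m. \<Sum>(n1, n2) \<leftarrow> hcomult N n.
      actL (mu (lam (h m1 n1))) (actL (nu n2) (actL (mu m2) l)))
    = (\<Sum>(m1, m2) \<leftarrow> hcomult M m. \<Sum>(c1, c2) \<leftarrow> hcomult M m1. \<Sum>(n1, n2) \<leftarrow> hcomult N n. \<Sum>(d1, d2) \<leftarrow> hcomult N n1.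
      actL (mu c1) (actL (nu d1) (actL (mu (hantipode M c2)) (actL (hantipode P (nu d2)) (actL (nu n2) (actL (mu m2) l))))))"
    by (simp only: act_boundary_h, rule arg_cong[where f=sum_list], rule map_cong[OF refl], clarify,
        rule sum_list_pairs_swap)
  also have "\<dots> = actL (mu m) (actL (nu n) l)"
    by (simp only: cancel_N cancel_M)
  finally show ?thesis .
qed

lemma hmult_h_eq_sum_act: "hmult L (h m n) l = (\<Sum>(m1, m2) \<leftarrow> hcomult M m. \<Sum>(n1, n2) \<leftarrow> hcomult N n.
    hmult L (actL (mu (lam (h m1 n1))) l) (h m2 n2))"
proof -
  have "hmult L (h m n) l = (\<Sum>(y1, y2) \<leftarrow> hcomult L (h m n). hmult L (actL (mu (lam y1)) l) y2)"
    by (rule crossed_module_mult_eq_sum_act[OF cmL ccL, unfolded o_def])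
  also have "\<dots> = (\<Sum>(m1, m2) \<leftarrow> hcomult M m. \<Sum>(n1, n2) \<leftarrow> hcomult N n.
      hmult L (actL (mu (lam (h m1 n1))) l) (h m2 n2))"
    by (rule sum_comult_coalg_map2[OF h ccL _ vector_spaces(1)]) (intro bilinear_mapI lin_rules vector_spaces)
  finally show ?thesis .
qed

lemma act_h_exchange: "(\<Sum>(m1, m2) \<leftarrow> hcomult M m. \<Sum>(n1, n2) \<leftarrow> hcomult N n.
      hmult L (actL (mu m1) (actL (nu n1) l)) (h m2 n2))
  = (\<Sum>(m1, m2) \<leftarrow> hcomult M m. \<Sum>(n1, n2) \<leftarrow> hcomult N n.
      hmult L (h m1 n1) (actL (nu n2) (actL (mu m2) l)))"
proof -
  let ?d = "\<lambda>y. mu (lam y)"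
  have "(\<Sum>(m1, m2) \<leftarrow> hcomult M m. \<Sum>(n1, n2) \<leftarrow> hcomult N n.
      hmult L (h m1 n1) (actL (nu n2) (actL (mu m2) l)))
    = (\<Sum>(m1, m2) \<leftarrow> hcomult M m. \<Sum>(a, b) \<leftarrow> hcomult M m1. \<Sum>(n1, n2) \<leftarrow> hcomult N n. \<Sum>(c, e) \<leftarrow> hcomult N n1.
        hmult L (actL (?d (h a c)) (actL (nu n2) (actL (mu m2) l))) (h b e))"
    by (simp only: hmult_h_eq_sum_act, rule arg_cong[where f=sum_list], rule map_cong[OF refl], clarify,
        rule sum_list_pairs_swap)
  also have "\<dots> = (\<Sum>(m1, m2) \<leftarrow> hcomult M m. \<Sum>(a, b) \<leftarrow> hcomult M m1. \<Sum>(n1, n2) \<leftarrow> hcomult N n. \<Sum>(c, e) \<leftarrow> hcomult N n1.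
        hmult L (actL (?d (h a c)) (actL (nu n2) (actL (mu b) l))) (h m2 e))"
    \<comment> \<open>cocommutativity trades the second legs of $m$ and $n$ between $h$ and the action\<close>
    by (rule sum_comult_swap_last[OF ccM _ vector_spaces(1)]) (intro trilinear_mapI lin_rules vector_spaces)
  also have "\<dots> = (\<Sum>(m1, m2) \<leftarrow> hcomult M m. \<Sum>(a, b) \<leftarrow> hcomult M m1. \<Sum>(n1, n2) \<leftarrow> hcomult N n. \<Sum>(c, e) \<leftarrow> hcomult N n1.
        hmult L (actL (?d (h a c)) (actL (nu e) (actL (mu b) l))) (h m2 n2))"
    by (rule arg_cong[where f=sum_list], rule map_cong[OF refl], clarify,
        rule arg_cong[where f=sum_list], rule map_cong[OF refl], clarify,
        rule sum_comult_swap_last[OF ccN _ vector_spaces(1)], intro trilinear_mapI lin_rules vector_spaces)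
  also have "\<dots> = (\<Sum>(m1, m2) \<leftarrow> hcomult M m. \<Sum>(n1, n2) \<leftarrow> hcomult N n. \<Sum>(a, b) \<leftarrow> hcomult M m1. \<Sum>(c, e) \<leftarrow> hcomult N n1.
        hmult L (actL (?d (h a c)) (actL (nu e) (actL (mu b) l))) (h m2 n2))"
    by (rule arg_cong[where f=sum_list], rule map_cong[OF refl], clarify, rule sum_list_pairs_swap)
  also have "\<dots> = (\<Sum>(m1, m2) \<leftarrow> hcomult M m. \<Sum>(n1, n2) \<leftarrow> hcomult N n.
        hmult L (\<Sum>(a, b) \<leftarrow> hcomult M m1. \<Sum>(c, e) \<leftarrow> hcomult N n1.
          actL (?d (h a c)) (actL (nu e) (actL (mu b) l))) (h m2 n2))"
    by (simp add: lin_sum_list[OF cc_mult_linear_left[OF ccL]] case_prod_beta')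
  also have "\<dots> = (\<Sum>(m1, m2) \<leftarrow> hcomult M m. \<Sum>(n1, n2) \<leftarrow> hcomult N n.
        hmult L (actL (mu m1) (actL (nu n1) l)) (h m2 n2))"
    by (simp only: act_boundary_h_cancel)
  finally show ?thesis by simp
qed

end

theorem proposition2p5:
  fixes L :: "('k::field, 'l::ab_group_add) hopf" and M :: "('k, 'm::ab_group_add) hopf"
    and N :: "('k, 'n::ab_group_add) hopf" and P :: "('k, 'p::ab_group_add) hopf"
    and actL :: "'p \<Rightarrow> 'l \<Rightarrow> 'l" and actM :: "'p \<Rightarrow> 'm \<Rightarrow> 'm" and actN :: "'p \<Rightarrow> 'n \<Rightarrow> 'n"
    and h :: "'m \<Rightarrow> 'n \<Rightarrow> 'l" and lam :: "'l \<Rightarrow> 'm" and lam' :: "'l \<Rightarrow> 'n"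
    and mu :: "'m \<Rightarrow> 'p" and nu :: "'n \<Rightarrow> 'p"
    and L2 :: "('k, 'l2::ab_group_add) hopf" and M2 :: "('k, 'm2::ab_group_add) hopf"
    and N2 :: "('k, 'n2::ab_group_add) hopf" and P2 :: "('k, 'p2::ab_group_add) hopf"
    and actL2 :: "'p2 \<Rightarrow> 'l2 \<Rightarrow> 'l2" and actM2 :: "'p2 \<Rightarrow> 'm2 \<Rightarrow> 'm2"
    and actN2 :: "'p2 \<Rightarrow> 'n2 \<Rightarrow> 'n2"
    and h2 :: "'m2 \<Rightarrow> 'n2 \<Rightarrow> 'l2" and lam2 :: "'l2 \<Rightarrow> 'm2" and lam2' :: "'l2 \<Rightarrow> 'n2"
    and mu2 :: "'m2 \<Rightarrow> 'p2" and nu2 :: "'n2 \<Rightarrow> 'p2"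
  assumes XS: "hopf_crossed_square L M N P actL actM actN h lam lam' mu nu"
    and XS2: "hopf_crossed_square L2 M2 N2 P2 actL2 actM2 actN2 h2 lam2 lam2' mu2 nu2"
  shows "hopf_2action L M N P actL actM actN (\<lambda>m l. actL (mu m) l) (\<lambda>n l. actL (nu n) l) h
    \<and> (\<forall>\<alpha> \<beta> \<gamma> \<delta>.
         hopf_crossed_square_morphism L M N P actL actM actN h lam lam' mu nu
           L2 M2 N2 P2 actL2 actM2 actN2 h2 lam2 lam2' mu2 nu2 \<alpha> \<beta> \<gamma> \<delta>
         \<longrightarrow> hopf_2action_morphism L M N P actL actM actN
               (\<lambda>m l. actL (mu m) l) (\<lambda>n l. actL (nu n) l) h
               L2 M2 N2 P2 actL2 actM2 actN2
               (\<lambda>m l. actL2 (mu2 m) l) (\<lambda>n l. actL2 (nu2 n) l) h2 \<alpha> \<beta> \<gamma> \<delta>)"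
proof (intro conjI allI impI)
  interpret crossed_square L M N P actL actM actN h lam lam' mu nu
    by (rule crossed_square.intro[OF XS])
  show "hopf_2action L M N P actL actM actN (\<lambda>m l. actL (mu m) l) (\<lambda>n l. actL (nu n) l) h"
    unfolding hopf_2action_def
    using XS[unfolded hopf_crossed_square_def]
      module_hopf_pullback[OF actL mu ccM ccP ccL] module_hopf_pullback[OF actL nu ccN ccP ccL]
      pullback_act_equivariant[OF cmM actL ccP ccL] pullback_act_equivariant[OF cmN actL ccP ccL]
      h_unit_left h_unit_right act_h_exchange
    by simp
next
  fix \<alpha> \<beta> \<gamma> \<delta>
  assume "hopf_crossed_square_morphism L M N P actL actM actN h lam lam' mu nu
    L2 M2 N2 P2 actL2 actM2 actN2 h2 lam2 lam2' mu2 nu2 \<alpha> \<beta> \<gamma> \<delta>"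
  then show "hopf_2action_morphism L M N P actL actM actN
    (\<lambda>m l. actL (mu m) l) (\<lambda>n l. actL (nu n) l) h
    L2 M2 N2 P2 actL2 actM2 actN2
    (\<lambda>m l. actL2 (mu2 m) l) (\<lambda>n l. actL2 (nu2 n) l) h2 \<alpha> \<beta> \<gamma> \<delta>"
    unfolding hopf_crossed_square_morphism_def hopf_2action_morphism_def by simp
qed

end
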